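(* For any torsionfree compact Hausdorff linear-topological $o$-module $M$, the locally convex $K$-vector space $M_K$ is complete.
   Context: $K$ is a finite extension of $\mathbb{Q}_p$ with ring of integers $o$. A topological $o$-module is linear-topological if $0$ has a fundamental system of open neighbourhoods consisting of $o$-submodules. For a torsionfree $o$-module $M$, $M_K := M\otimes_o K$ contains $M$, and $M_K$ is equipped with the finest locally convex topology such that the inclusion $M\subseteq M_K$ is continuous (equivalently, an $o$-submodule $L\subseteq M_K$ is open iff $\alpha L\cap M$ is open in $M$ for every $0\neq\alpha\in o$). *)

theory Defs
  imports "HOL-Analysis.Analysis"
begin

text \<open>The base field K: a field of characteristic 0, complete with respect to a
 discrete non-archimedean absolute value with finite residue field
 (= a finite extension of Q_p for some prime p).\<close>

definition p_adic_field :: "('k::field \<Rightarrow> real) \<Rightarrow> bool" where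
  "p_adic_field nv \<longleftrightarrow>
     (\<forall>x. 0 \<le> nv x) \<and> (\<forall>x. nv x = 0 \<longleftrightarrow> x = 0) \<and>
     (\<forall>x y. nv (x * y) = nv x * nv y) \<and>
     (\<forall>x y. nv (x + y) \<le> max (nv x) (nv y)) \<and>
     (\<exists>\<pi>. 0 < nv \<pi> \<and> nv \<pi> < 1 \<and> (\<forall>x. x \<noteq> 0 \<longrightarrow> (\<exists>n::int. nv x = nv \<pi> powi n))) \<and>
     (\<forall>X::nat \<Rightarrow> 'k. (\<forall>e>0. \<exists>N. \<forall>m\<ge>N. \<forall>n\<ge>N. nv (X m - X n) < e) \<longrightarrow>
        (\<exists>L. \<forall>e>0. \<exists>N. \<forall>n\<ge>N. nv (X n - L) < e)) \<and>
     (\<exists>R. finite R \<and> (\<forall>x. nv x \<le> 1 \<longrightarrow> (\<exists>r\<in>R. nv r \<le> 1 \<and> nv (x - r) < 1))) \<and>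
     (\<forall>n::nat. n > 0 \<longrightarrow> of_nat n \<noteq> (0::'k))"

definition int_ring :: "('k::field \<Rightarrow> real) \<Rightarrow> 'k set" where
  "int_ring nv = {x. nv x \<le> 1}"

definition int_ring_topology :: "('k::field \<Rightarrow> real) \<Rightarrow> 'k topology" where
  "int_ring_topology nv = topology (\<lambda>U. U \<subseteq> int_ring nv \<and>
      (\<forall>x\<in>U. \<exists>e>0. \<forall>y\<in>int_ring nv. nv (y - x) < e \<longrightarrow> y \<in> U))"

definition o_submodule :: "('k::field \<Rightarrow> real) \<Rightarrow> ('k \<Rightarrow> 'v::ab_group_add \<Rightarrow> 'v) \<Rightarrow> 'v set \<Rightarrow> bool" where
  "o_submodule nv smul L \<longleftrightarrow> 0 \<in> L \<and> (\<forall>x\<in>L. \<forall>y\<in>L. x + y \<in> L) \<and>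
      (\<forall>a x. a \<in> int_ring nv \<longrightarrow> x \<in> L \<longrightarrow> smul a x \<in> L)"

definition topological_o_module :: "('k::field \<Rightarrow> real) \<Rightarrow> ('k \<Rightarrow> 'v::ab_group_add \<Rightarrow> 'v) \<Rightarrow> 'v topology \<Rightarrow> bool" where
  "topological_o_module nv smul T \<longleftrightarrow> o_submodule nv smul (topspace T) \<and>
      continuous_map (prod_topology T T) T (\<lambda>(x, y). x + y) \<and>
      continuous_map T T uminus \<and>
      continuous_map (prod_topology (int_ring_topology nv) T) T (\<lambda>(a, x). smul a x)"

definition linear_topological :: "('k::field \<Rightarrow> real) \<Rightarrow> ('k \<Rightarrow> 'v::ab_group_add \<Rightarrow> 'v) \<Rightarrow> 'v topology \<Rightarrow> bool" where
  "linear_topological nv smul T \<longleftrightarrow>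
     (\<forall>U. openin T U \<and> 0 \<in> U \<longrightarrow> (\<exists>L. o_submodule nv smul L \<and> openin T L \<and> L \<subseteq> U))"

text \<open>The finest locally convex topology on M_K (= the whole ambient type) such that
 the inclusion M \<subseteq> M_K is continuous: the open o-submodules are those L with
 \<alpha>L \<inter> M open in M for all nonzero \<alpha> in o, and these form a basis of 0-neighbourhoods.\<close>
definition MK_topology :: "('k::field \<Rightarrow> real) \<Rightarrow> ('k \<Rightarrow> 'v::ab_group_add \<Rightarrow> 'v) \<Rightarrow> 'v set \<Rightarrow> 'v topology \<Rightarrow> 'v topology" where
  "MK_topology nv smul M T = topology (\<lambda>U. \<forall>x\<in>U. \<exists>L. o_submodule nv smul L \<and>
      (\<forall>\<alpha>. \<alpha> \<in> int_ring nv \<and> \<alpha> \<noteq> 0 \<longrightarrow> openin T (smul \<alpha> ` L \<inter> M)) \<and>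
      (\<lambda>y. x + y) ` L \<subseteq> U)"

definition tvs_cauchy_filter :: "'v::ab_group_add topology \<Rightarrow> 'v filter \<Rightarrow> bool" where
  "tvs_cauchy_filter \<tau> F \<longleftrightarrow> F \<noteq> bot \<and> eventually (\<lambda>x. x \<in> topspace \<tau>) F \<and>
     (\<forall>U. openin \<tau> U \<and> 0 \<in> U \<longrightarrow>
        (\<exists>A. eventually (\<lambda>x. x \<in> A) F \<and> (\<forall>x\<in>A. \<forall>y\<in>A. x - y \<in> U)))"

definition tvs_complete :: "'v::ab_group_add topology \<Rightarrow> bool" where
  "tvs_complete \<tau> \<longleftrightarrow> (\<forall>F. tvs_cauchy_filter \<tau> F \<longrightarrow> (\<exists>x. limitin \<tau> id x F))"

end

theory Submission
  imports Defs "HOL-Library.Set_Algebras"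
begin

(*
  Call an o-submodule L of M_K open if \<alpha>L \<inter> M is open in M for every nonzero \<alpha> in o.
  A Cauchy filter F on M_K is first shown to be bounded: for some n it is eventually contained
  in \<pi>^-n M + L for every open L. Otherwise choose a failing L_n for each n; the intersection
  of the \<pi>^-n M + L_n is again open (for a given \<alpha>, all but finitely many terms contain
  \<alpha>^-1 M), so some A in F has A - A inside it, and then A lies in \<pi>^-m M + L_m for any m with
  A \<inter> \<pi>^-m M nonempty. For such n the closures in M of the sets M \<inter> \<pi>^n (A + L), with A in F
  and L open, have the finite intersection property; compactness of M yields a common point x,
  and \<pi>^-n x is a limit of F.
*)

locale mult_valued_field =
  fixes nv :: "'k::field \<Rightarrow> real"
  assumes nv_nonneg: "0 \<le> nv x"
    and nv_eq_0_iff: "nv x = 0 \<longleftrightarrow> x = 0"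
    and nv_mult: "nv (x * y) = nv x * nv y"
begin

lemma nv_pos: "x \<noteq> 0 \<Longrightarrow> 0 < nv x"
  using nv_nonneg[of x] nv_eq_0_iff[of x] by linarith

lemma nv_one: "nv 1 = 1"
  using nv_mult[of 1 1] nv_pos[of 1] by simp

lemma nv_minus_one: "nv (-1) = 1"
proof -
  have "(nv (-1))\<^sup>2 = 1"
    using nv_mult[of "-1" "-1"] nv_one by (simp add: power2_eq_square)
  then show ?thesis
    using nv_nonneg[of "-1"] by (simp add: power2_eq_1_iff)
qed

lemma nv_power: "nv (x ^ n) = nv x ^ n"
  by (induct n) (simp_all add: nv_one nv_mult)

lemma minus_one_in_int_ring: "-1 \<in> int_ring nv"
  by (simp add: int_ring_def nv_minus_one)

lemma divide_in_int_ring: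
  assumes "a \<noteq> 0" "nv b \<le> nv a"
  shows "b / a \<in> int_ring nv"
proof -
  have "nv b = nv (b / a) * nv a"
    using nv_mult[of "b / a" a] assms(1) by simp
  then show ?thesis
    using assms nv_pos[of a] by (simp add: int_ring_def mult_le_cancel_right2)
qed

end

locale pseudo_uniformizer = mult_valued_field +
  fixes \<pi> :: "'k::field"
  assumes nv_pi_pos: "0 < nv \<pi>"
    and nv_pi_less_1: "nv \<pi> < 1"
begin

lemma pi_power_nonzero: "\<pi> ^ n \<noteq> 0"
  using nv_pi_pos nv_eq_0_iff[of \<pi>] by simp

lemma pi_power_in_int_ring: "\<pi> ^ n \<in> int_ring nv"
  using nv_pi_pos nv_pi_less_1 by (simp add: int_ring_def nv_power power_le_one)

lemma eventually_pi_power_divide_in_int_ring: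
  assumes "a \<noteq> 0"
  shows "\<exists>k. \<forall>n\<ge>k. \<pi> ^ n / a \<in> int_ring nv"
proof -
  obtain k where k: "nv \<pi> ^ k < nv a"
    using real_arch_pow_inv[OF nv_pos[OF assms] nv_pi_less_1] by blast
  have "nv (\<pi> ^ n) \<le> nv a" if "n \<ge> k" for n
  proof -
    have "nv \<pi> ^ n \<le> nv \<pi> ^ k"
      using nv_pi_pos nv_pi_less_1 by (intro power_decreasing[OF that]) auto
    then show ?thesis
      using k by (simp add: nv_power)
  qed
  then show ?thesis
    using divide_in_int_ring[OF assms] by blast
qed

end

lemma p_adic_field_imp_pseudo_uniformizer:
  assumes "p_adic_field nv"
  obtains \<pi> where "pseudo_uniformizer nv \<pi>"
proof -
  have "mult_valued_field nv"
    using assms unfolding p_adic_field_def mult_valued_field_def by simp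
  moreover obtain \<pi> where "0 < nv \<pi>" "nv \<pi> < 1"
    using assms unfolding p_adic_field_def by auto
  ultimately show thesis
    using that pseudo_uniformizer.intro pseudo_uniformizer_axioms.intro by blast
qed

locale o_vector_space = vector_space smul + mult_valued_field nv
  for smul :: "'k::field \<Rightarrow> 'v::ab_group_add \<Rightarrow> 'v" and nv :: "'k \<Rightarrow> real"
begin

lemma o_submodule_zero: "o_submodule nv smul L \<Longrightarrow> 0 \<in> L"
  unfolding o_submodule_def by blast

lemma o_submodule_add: "o_submodule nv smul L \<Longrightarrow> x \<in> L \<Longrightarrow> y \<in> L \<Longrightarrow> x + y \<in> L"
  unfolding o_submodule_def by blast

lemma o_submodule_scale:
  "o_submodule nv smul L \<Longrightarrow> a \<in> int_ring nv \<Longrightarrow> x \<in> L \<Longrightarrow> smul a x \<in> L"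
  unfolding o_submodule_def by blast

lemma o_submodule_uminus: "o_submodule nv smul L \<Longrightarrow> x \<in> L \<Longrightarrow> - x \<in> L"
  using o_submodule_scale[OF _ minus_one_in_int_ring] by (metis scale_minus_left scale_one)

lemma o_submodule_diff: "o_submodule nv smul L \<Longrightarrow> x \<in> L \<Longrightarrow> y \<in> L \<Longrightarrow> x - y \<in> L"
  using o_submodule_add o_submodule_uminus by (metis diff_conv_add_uminus)

lemma o_submodule_UNIV: "o_submodule nv smul UNIV"
  unfolding o_submodule_def by blast

lemma o_submodule_Int:
  "o_submodule nv smul L \<Longrightarrow> o_submodule nv smul L' \<Longrightarrow> o_submodule nv smul (L \<inter> L')"
  unfolding o_submodule_def by blast

lemma o_submodule_INT:
  "(\<And>i. i \<in> I \<Longrightarrow> o_submodule nv smul (L i)) \<Longrightarrow> o_submodule nv smul (\<Inter>i\<in>I. L i)"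
  unfolding o_submodule_def by blast

lemma o_submodule_set_plus:
  assumes A: "o_submodule nv smul A" and B: "o_submodule nv smul B"
  shows "o_submodule nv smul (A + B)"
  unfolding o_submodule_def
proof (intro conjI allI ballI impI)
  show "0 \<in> A + B"
    using set_plus_intro[OF o_submodule_zero[OF A] o_submodule_zero[OF B]] by simp
next
  fix x y assume "x \<in> A + B" "y \<in> A + B"
  then obtain a b a' b' where "x = a + b" "y = a' + b'" "a \<in> A" "b \<in> B" "a' \<in> A" "b' \<in> B"
    by (elim set_plus_elim)
  then have "x + y = (a + a') + (b + b')" "a + a' \<in> A" "b + b' \<in> B"
    using o_submodule_add[OF A] o_submodule_add[OF B] by (simp_all add: algebra_simps)
  then show "x + y \<in> A + B"
    by (simp add: set_plus_intro)
next
  fix c x assume c: "c \<in> int_ring nv" and "x \<in> A + B"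
  then obtain a b where "x = a + b" "a \<in> A" "b \<in> B"
    by (elim set_plus_elim)
  then have "smul c x = smul c a + smul c b" "smul c a \<in> A" "smul c b \<in> B"
    using o_submodule_scale[OF A c] o_submodule_scale[OF B c] by (simp_all add: scale_right_distrib)
  then show "smul c x \<in> A + B"
    by (simp add: set_plus_intro)
qed

lemma o_submodule_image_scale:
  assumes L: "o_submodule nv smul L"
  shows "o_submodule nv smul (smul c ` L)"
  unfolding o_submodule_def
proof (intro conjI allI ballI impI)
  show "0 \<in> smul c ` L"
    using o_submodule_zero[OF L] by (metis image_eqI scale_zero_right)
  show "x + y \<in> smul c ` L" if "x \<in> smul c ` L" "y \<in> smul c ` L" for x y
    using that o_submodule_add[OF L] by (auto simp flip: scale_right_distrib)
  show "smul a x \<in> smul c ` L" if a: "a \<in> int_ring nv" and "x \<in> smul c ` L" for a x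
  proof -
    from \<open>x \<in> smul c ` L\<close> obtain l where "l \<in> L" "x = smul c l" by blast
    then have "smul a x = smul c (smul a l)" "smul a l \<in> L"
      using o_submodule_scale[OF L a] by (metis scale_left_commute)+
    then show ?thesis by (rule image_eqI)
  qed
qed

lemma o_submodule_vimage_scale:
  assumes L: "o_submodule nv smul L"
  shows "o_submodule nv smul {u. smul c u \<in> L}"
  unfolding o_submodule_def
proof (intro conjI allI ballI impI)
  show "0 \<in> {u. smul c u \<in> L}"
    using o_submodule_zero[OF L] by simp
  show "x + y \<in> {u. smul c u \<in> L}" if "x \<in> {u. smul c u \<in> L}" "y \<in> {u. smul c u \<in> L}" for x y
    using that o_submodule_add[OF L] by (simp add: scale_right_distrib)
  show "smul a x \<in> {u. smul c u \<in> L}" if "a \<in> int_ring nv" "x \<in> {u. smul c u \<in> L}" for a x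
    using that o_submodule_scale[OF L] by (metis mem_Collect_eq scale_left_commute)
qed

end

lemma openin_translate_vimage:
  fixes T :: "'v::ab_group_add topology"
  assumes add: "continuous_map (prod_topology T T) T (\<lambda>(x, y). x + y)"
    and S: "openin T S" and y: "- y \<in> topspace T"
  shows "openin T {z \<in> topspace T. z - y \<in> S}"
proof -
  have "continuous_map T (prod_topology T T) (\<lambda>z. (z, - y))"
    using y by (simp add: continuous_map_pairedI)
  from continuous_map_compose[OF this add] have "continuous_map T T (\<lambda>z. z - y)"
    by (simp add: o_def)
  then show ?thesis
    using openin_continuous_map_preimage[OF _ S] by blast
qed

lemma openin_subgroup:
  fixes T :: "'v::ab_group_add topology"
  assumes add: "continuous_map (prod_topology T T) T (\<lambda>(x, y). x + y)"
    and V: "openin T V" "0 \<in> V" "V \<subseteq> S" and S: "S \<subseteq> topspace T"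
    and S_add: "\<And>x y. x \<in> S \<Longrightarrow> y \<in> S \<Longrightarrow> x + y \<in> S"
    and S_uminus: "\<And>x. x \<in> S \<Longrightarrow> - x \<in> S"
  shows "openin T S"
proof (subst openin_subopen, intro ballI)
  fix y assume y: "y \<in> S"
  have "openin T {z \<in> topspace T. z - y \<in> V}"
    using openin_translate_vimage[OF add V(1)] S S_uminus[OF y] by blast
  moreover have "{z \<in> topspace T. z - y \<in> V} \<subseteq> S"
    using S_add[of _ y] V(3) y by (metis (mono_tags, lifting) diff_add_cancel mem_Collect_eq subset_iff)
  ultimately show "\<exists>U. openin T U \<and> y \<in> U \<and> U \<subseteq> S"
    using y S V(2) by auto
qed

locale compact_o_lattice = o_vector_space smul nv + pseudo_uniformizer nv \<pi>
  for smul :: "'k::field \<Rightarrow> 'v::ab_group_add \<Rightarrow> 'v" and nv :: "'k \<Rightarrow> real" and \<pi> :: 'k +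
  fixes M :: "'v set" and T :: "'v topology"
  assumes o_submodule_M: "o_submodule nv smul M"
    and M_absorbing: "\<forall>v. \<exists>a. a \<in> int_ring nv \<and> a \<noteq> 0 \<and> smul a v \<in> M"
    and topspace_T: "topspace T = M"
    and continuous_add: "continuous_map (prod_topology T T) T (\<lambda>(x, y). x + y)"
    and compact_T: "compact_space T"
begin

definition MK_open_submodule :: "'v set \<Rightarrow> bool" where
  "MK_open_submodule L \<longleftrightarrow> o_submodule nv smul L \<and>
      (\<forall>\<alpha>. \<alpha> \<in> int_ring nv \<and> \<alpha> \<noteq> 0 \<longrightarrow> openin T (smul \<alpha> ` L \<inter> M))"

lemma MK_open_submodule_Int:
  assumes "MK_open_submodule L" "MK_open_submodule L'"
  shows "MK_open_submodule (L \<inter> L')"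
proof -
  have "smul \<alpha> ` (L \<inter> L') \<inter> M = (smul \<alpha> ` L \<inter> M) \<inter> (smul \<alpha> ` L' \<inter> M)" if "\<alpha> \<noteq> 0" for \<alpha>
    using image_Int[OF injective_scale[OF that]] by blast
  then show ?thesis
    using assms by (simp add: MK_open_submodule_def o_submodule_Int openin_Int)
qed

lemma MK_open_submodule_UNIV: "MK_open_submodule UNIV"
proof -
  have "smul \<alpha> ` UNIV = UNIV" if "\<alpha> \<noteq> 0" for \<alpha>
    using that by (intro surjI[of _ "smul (inverse \<alpha>)"]) simp
  then show ?thesis
    using openin_topspace[of T] by (simp add: MK_open_submodule_def o_submodule_UNIV topspace_T)
qed

lemma openin_o_submodule:
  assumes "o_submodule nv smul S" "S \<subseteq> M" "openin T V" "0 \<in> V" "V \<subseteq> S"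
  shows "openin T S"
  using openin_subgroup[OF continuous_add assms(3-5)] assms(1,2) topspace_T
    o_submodule_add o_submodule_uminus by blast

lemma openin_MK_topology:
  "openin (MK_topology nv smul M T) U \<longleftrightarrow>
     (\<forall>x\<in>U. \<exists>L. MK_open_submodule L \<and> (\<lambda>y. x + y) ` L \<subseteq> U)"
proof -
  let ?open = "\<lambda>U. \<forall>x\<in>U. \<exists>L. MK_open_submodule L \<and> (\<lambda>y. x + y) ` L \<subseteq> U"
  have "istopology ?open"
    unfolding istopology_def
  proof (intro conjI allI impI)
    fix U U' assume U: "?open U" and U': "?open U'"
    show "?open (U \<inter> U')"
    proof
      fix x assume "x \<in> U \<inter> U'"
      then obtain L L' where "MK_open_submodule L" "(\<lambda>y. x + y) ` L \<subseteq> U"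
        and "MK_open_submodule L'" "(\<lambda>y. x + y) ` L' \<subseteq> U'"
        using U U' by blast
      then show "\<exists>L. MK_open_submodule L \<and> (\<lambda>y. x + y) ` L \<subseteq> U \<inter> U'"
        by (intro exI[of _ "L \<inter> L'"]) (auto intro: MK_open_submodule_Int)
    qed
  next
    fix \<U> assume "\<forall>U\<in>\<U>. ?open U"
    then show "?open (\<Union>\<U>)"
      by (meson UnionE Union_upper subset_trans)
  qed
  moreover have "MK_topology nv smul M T = topology ?open"
    unfolding MK_topology_def MK_open_submodule_def by (simp only: conj_assoc)
  ultimately show ?thesis
    by simp
qed

lemma topspace_MK_topology: "topspace (MK_topology nv smul M T) = UNIV"
proof -
  have "openin (MK_topology nv smul M T) UNIV"
    using MK_open_submodule_UNIV by (auto simp: openin_MK_topology)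
  then show ?thesis
    by (simp add: openin_subset top.extremum_uniqueI)
qed

lemma openin_MK_topology_MK_open_submodule:
  assumes "MK_open_submodule L"
  shows "openin (MK_topology nv smul M T) L"
  unfolding openin_MK_topology
proof
  fix x assume "x \<in> L"
  then have "(\<lambda>y. x + y) ` L \<subseteq> L"
    using assms o_submodule_add unfolding MK_open_submodule_def by blast
  then show "\<exists>L'. MK_open_submodule L' \<and> (\<lambda>y. x + y) ` L' \<subseteq> L"
    using assms by blast
qed

lemma tvs_cauchy_filter_MK_open_submodule:
  assumes "tvs_cauchy_filter (MK_topology nv smul M T) F" "MK_open_submodule L"
  shows "\<exists>A. eventually (\<lambda>x. x \<in> A) F \<and> (\<forall>x\<in>A. \<forall>y\<in>A. x - y \<in> L)"
proof -
  have "openin (MK_topology nv smul M T) L" "0 \<in> L"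
    using assms(2) openin_MK_topology_MK_open_submodule o_submodule_zero
    unfolding MK_open_submodule_def by blast+
  then show ?thesis
    using assms(1) unfolding tvs_cauchy_filter_def by blast
qed

definition Mdiv :: "nat \<Rightarrow> 'v set" where
  "Mdiv n = {u. smul (\<pi> ^ n) u \<in> M}"

lemma o_submodule_Mdiv: "o_submodule nv smul (Mdiv n)"
  unfolding Mdiv_def by (rule o_submodule_vimage_scale[OF o_submodule_M])

lemma eventually_scale_inverse_M_subset_Mdiv:
  assumes "\<alpha> \<noteq> 0"
  shows "\<exists>k. \<forall>n\<ge>k. smul (inverse \<alpha>) ` M \<subseteq> Mdiv n"
proof -
  obtain k where k: "\<And>n. n \<ge> k \<Longrightarrow> \<pi> ^ n / \<alpha> \<in> int_ring nv"
    using eventually_pi_power_divide_in_int_ring[OF assms] by blast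
  have "smul (\<pi> ^ n) (smul (inverse \<alpha>) v) \<in> M" if "n \<ge> k" "v \<in> M" for n v
    using o_submodule_scale[OF o_submodule_M k that(2)] that(1) by (simp add: divide_inverse)
  then show ?thesis
    unfolding Mdiv_def by blast
qed

lemma Mdiv_exhausts: "\<exists>n. v \<in> Mdiv n"
proof -
  obtain a where a: "a \<noteq> 0" "smul a v \<in> M"
    using M_absorbing by blast
  then obtain k where "smul (inverse a) ` M \<subseteq> Mdiv k"
    using eventually_scale_inverse_M_subset_Mdiv by blast
  then show ?thesis
    using a by (metis image_subset_iff scale_scale left_inverse scale_one)
qed

definition Mdiv_bounded :: "'v filter \<Rightarrow> nat \<Rightarrow> bool" where
  "Mdiv_bounded F n \<longleftrightarrow> (\<forall>L. MK_open_submodule L \<longrightarrow> (\<exists>A. eventually (\<lambda>x. x \<in> A) F \<and> A \<subseteq> Mdiv n + L))"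

lemma MK_open_submodule_INT_Mdiv_plus:
  assumes L: "\<And>n. MK_open_submodule (L n)"
  shows "MK_open_submodule (\<Inter>n. Mdiv n + L n)"
  unfolding MK_open_submodule_def
proof (intro conjI allI impI)
  have L_sub: "o_submodule nv smul (L n)" for n
    using L unfolding MK_open_submodule_def by blast
  show sub: "o_submodule nv smul (\<Inter>n. Mdiv n + L n)"
    by (intro o_submodule_INT o_submodule_set_plus o_submodule_Mdiv L_sub)
  fix \<alpha> assume \<alpha>: "\<alpha> \<in> int_ring nv \<and> \<alpha> \<noteq> 0"
  obtain k where k: "\<And>n. n \<ge> k \<Longrightarrow> smul (inverse \<alpha>) ` M \<subseteq> Mdiv n"
    using eventually_scale_inverse_M_subset_Mdiv \<alpha> by blast
  \<comment> \<open>The terms with \<open>n \<ge> k\<close> contain \<open>\<alpha>\<^sup>-\<^sup>1 M\<close>, so only the first \<open>k\<close> terms cut down \<open>\<alpha> L \<inter> M\<close>.\<close>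
  define V where "V = (\<Inter>n\<in>{..<k}. smul \<alpha> ` L n \<inter> M) \<inter> M"
  have V_open: "openin T V"
  proof -
    have "openin T (smul \<alpha> ` L n \<inter> M)" if "n \<in> {..<k}" for n
      using L[of n] \<alpha> unfolding MK_open_submodule_def by blast
    then have "openin T ((\<Inter>n\<in>{..<k}. smul \<alpha> ` L n \<inter> M) \<inter> topspace T)"
      by (rule openin_INT[OF finite_lessThan])
    then show ?thesis
      unfolding V_def topspace_T .
  qed
  have V_0: "0 \<in> V"
    using o_submodule_zero[OF o_submodule_image_scale[OF L_sub]] o_submodule_zero[OF o_submodule_M]
    unfolding V_def by simp
  have V_sub: "V \<subseteq> smul \<alpha> ` (\<Inter>n. Mdiv n + L n)"
  proof
    fix v assume v: "v \<in> V"
    have "smul (inverse \<alpha>) v \<in> Mdiv n + L n" for n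
    proof (cases "n < k")
      case True
      then have "n \<in> {..<k}"
        by simp
      then have "v \<in> smul \<alpha> ` L n"
        using v unfolding V_def by blast
      then obtain l where "l \<in> L n" "v = smul \<alpha> l"
        by (elim imageE)
      then show ?thesis
        using \<alpha> set_plus_intro[OF o_submodule_zero[OF o_submodule_Mdiv] \<open>l \<in> L n\<close>] by simp
    next
      case False
      then have "smul (inverse \<alpha>) v \<in> Mdiv n"
        using k[of n] v unfolding V_def by auto
      then show ?thesis
        using set_plus_intro[OF _ o_submodule_zero[OF L_sub]] by simp
    qed
    then have "smul (inverse \<alpha>) v \<in> (\<Inter>n. Mdiv n + L n)"
      by simp
    moreover have "v = smul \<alpha> (smul (inverse \<alpha>) v)"
      using \<alpha> by simp
    ultimately show "v \<in> smul \<alpha> ` (\<Inter>n. Mdiv n + L n)"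
      by (intro image_eqI)
  qed
  show "openin T (smul \<alpha> ` (\<Inter>n. Mdiv n + L n) \<inter> M)"
  proof (rule openin_o_submodule[OF _ _ V_open V_0])
    show "o_submodule nv smul (smul \<alpha> ` (\<Inter>n. Mdiv n + L n) \<inter> M)"
      by (rule o_submodule_Int[OF o_submodule_image_scale[OF sub] o_submodule_M])
    show "V \<subseteq> smul \<alpha> ` (\<Inter>n. Mdiv n + L n) \<inter> M"
      using V_sub unfolding V_def by blast
    show "smul \<alpha> ` (\<Inter>n. Mdiv n + L n) \<inter> M \<subseteq> M"
      by (rule Int_lower2)
  qed
qed

lemma tvs_cauchy_filter_Mdiv_bounded:
  assumes F: "tvs_cauchy_filter (MK_topology nv smul M T) F"
  shows "\<exists>n. Mdiv_bounded F n"
proof (rule ccontr)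
  assume "\<nexists>n. Mdiv_bounded F n"
  then have "\<forall>n. \<exists>L. MK_open_submodule L \<and> (\<forall>A. \<not> (eventually (\<lambda>x. x \<in> A) F \<and> A \<subseteq> Mdiv n + L))"
    unfolding Mdiv_bounded_def by (simp only: not_ex not_all not_imp simp_thms)
  then obtain L where L_spec:
    "\<forall>n. MK_open_submodule (L n) \<and> (\<forall>A. \<not> (eventually (\<lambda>x. x \<in> A) F \<and> A \<subseteq> Mdiv n + L n))"
    by (metis choice)
  then have L: "\<And>n. MK_open_submodule (L n)"
    and not_in: "\<And>n A. eventually (\<lambda>x. x \<in> A) F \<Longrightarrow> \<not> A \<subseteq> Mdiv n + L n"
    by blast+
  have "\<exists>A. eventually (\<lambda>x. x \<in> A) F \<and> (\<forall>x\<in>A. \<forall>y\<in>A. x - y \<in> (\<Inter>n. Mdiv n + L n))"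
    by (rule tvs_cauchy_filter_MK_open_submodule[OF F MK_open_submodule_INT_Mdiv_plus[OF L]])
  then obtain A where A: "eventually (\<lambda>x. x \<in> A) F" "\<forall>x\<in>A. \<forall>y\<in>A. x - y \<in> (\<Inter>n. Mdiv n + L n)"
    by (elim exE conjE) (rule that)
  have "F \<noteq> bot"
    using F unfolding tvs_cauchy_filter_def by (elim conjE)
  then obtain a where a: "a \<in> A"
    using eventually_happens'[OF _ A(1)] by blast
  obtain m where m: "a \<in> Mdiv m"
    using Mdiv_exhausts by blast
  have "A \<subseteq> Mdiv m + L m"
  proof
    fix b assume "b \<in> A"
    then have "b - a \<in> Mdiv m + L m"
      using A(2)[rule_format, OF \<open>b \<in> A\<close> a] by simp
    then obtain u l where "b - a = u + l" "u \<in> Mdiv m" "l \<in> L m"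
      by (elim set_plus_elim)
    moreover have "a + u \<in> Mdiv m"
      using o_submodule_add[OF o_submodule_Mdiv m \<open>u \<in> Mdiv m\<close>] .
    moreover have "b = (a + u) + l"
      using add.assoc[of a u l] \<open>b - a = u + l\<close> by (simp add: diff_eq_eq)
    ultimately show "b \<in> Mdiv m + L m"
      by (simp add: set_plus_intro)
  qed
  with not_in A(1) show False
    by blast
qed

lemma M_Int_scaled_sum_nonempty:
  assumes "F \<noteq> bot"
    and n: "Mdiv_bounded F n"
    and A: "eventually (\<lambda>x. x \<in> A) F" and L: "MK_open_submodule L"
  shows "M \<inter> smul (\<pi> ^ n) ` (A + L) \<noteq> {}"
proof -
  have "\<exists>A'. eventually (\<lambda>x. x \<in> A') F \<and> A' \<subseteq> Mdiv n + L"
    using n L unfolding Mdiv_bounded_def by simp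
  then obtain A' where A': "eventually (\<lambda>x. x \<in> A') F" "A' \<subseteq> Mdiv n + L"
    by (elim exE conjE) (rule that)
  obtain a where "a \<in> A" "a \<in> A'"
    using eventually_happens'[OF assms(1) eventually_conj[OF A A'(1)]] by blast
  then have "a \<in> Mdiv n + L"
    using A'(2) by blast
  then obtain u l where u: "a = u + l" "u \<in> Mdiv n" "l \<in> L"
    by (elim set_plus_elim)
  have "- l \<in> L"
    using u(3) L o_submodule_uminus unfolding MK_open_submodule_def by blast
  then have "a + - l \<in> A + L"
    using \<open>a \<in> A\<close> by (rule set_plus_intro[rotated])
  then have "u \<in> A + L"
    using u(1) by simp
  moreover have "smul (\<pi> ^ n) u \<in> M"
    using u(2) unfolding Mdiv_def by simp
  ultimately show ?thesis
    by blast
qed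

lemma finite_Inter_closure_of_scaled_sums:
  assumes "finite \<G>"
    and "\<G> \<subseteq> {T closure_of (M \<inter> smul c ` (A + L)) | A L. eventually (\<lambda>x. x \<in> A) F \<and> MK_open_submodule L}"
  shows "\<exists>A L. eventually (\<lambda>x. x \<in> A) F \<and> MK_open_submodule L \<and> M \<inter> smul c ` (A + L) \<subseteq> \<Inter>\<G>"
  using assms
proof (induction \<G> rule: finite_induct)
  case empty
  show ?case
    by (intro exI[of _ UNIV] conjI) (simp_all add: MK_open_submodule_UNIV)
next
  case (insert C \<G>)
  let ?B = "\<lambda>A L. M \<inter> smul c ` (A + L)"
  from insert have "\<exists>A L. eventually (\<lambda>x. x \<in> A) F \<and> MK_open_submodule L \<and> ?B A L \<subseteq> \<Inter>\<G>"
    by simp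
  then obtain A L where AL: "eventually (\<lambda>x. x \<in> A) F" "MK_open_submodule L" "?B A L \<subseteq> \<Inter>\<G>"
    by (elim exE conjE)
  from insert.prems have "C \<in> {T closure_of ?B A L | A L. eventually (\<lambda>x. x \<in> A) F \<and> MK_open_submodule L}"
    by simp
  then obtain A' L' where C: "C = T closure_of ?B A' L'"
    and A'L': "eventually (\<lambda>x. x \<in> A') F" "MK_open_submodule L'"
    by (elim CollectE exE conjE)
  have "?B A' L' \<subseteq> C"
    unfolding C topspace_T[symmetric] by (intro closure_of_subset Int_lower1)
  have "?B (A \<inter> A') (L \<inter> L') \<subseteq> ?B A' L' \<inter> ?B A L"
    using image_mono[OF set_plus_mono2[OF Int_lower1[of A A'] Int_lower1[of L L']], of "smul c"]
      image_mono[OF set_plus_mono2[OF Int_lower2[of A A'] Int_lower2[of L L']], of "smul c"]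
    by blast
  also have "\<dots> \<subseteq> C \<inter> \<Inter>\<G>"
    using \<open>?B A' L' \<subseteq> C\<close> AL(3) by (rule Int_mono)
  finally have "?B (A \<inter> A') (L \<inter> L') \<subseteq> \<Inter>(insert C \<G>)"
    by simp
  moreover have "eventually (\<lambda>x. x \<in> A \<inter> A') F"
    using eventually_conj[OF AL(1) A'L'(1)] by simp
  ultimately show ?case
    using MK_open_submodule_Int[OF AL(2) A'L'(2)] by (intro exI conjI)
qed

lemma Mdiv_bounded_cluster_point:
  assumes "F \<noteq> bot" and n: "Mdiv_bounded F n"
  obtains x where "\<And>A L. eventually (\<lambda>x. x \<in> A) F \<Longrightarrow> MK_open_submodule L \<Longrightarrow>
    x \<in> T closure_of (M \<inter> smul (\<pi> ^ n) ` (A + L))"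
proof -
  define \<U> where "\<U> = {T closure_of (M \<inter> smul (\<pi> ^ n) ` (A + L)) | A L.
    eventually (\<lambda>x. x \<in> A) F \<and> MK_open_submodule L}"
  have U_closed: "\<forall>C\<in>\<U>. closedin T C"
    unfolding \<U>_def by auto
  have U_fip: "\<forall>\<G>. finite \<G> \<and> \<G> \<subseteq> \<U> \<longrightarrow> \<Inter>\<G> \<noteq> {}"
  proof (intro allI impI)
    fix \<G> assume "finite \<G> \<and> \<G> \<subseteq> \<U>"
    then have "finite \<G>" "\<G> \<subseteq> \<U>"
      by simp_all
    from finite_Inter_closure_of_scaled_sums[OF this[unfolded \<U>_def]]
    obtain A L where "eventually (\<lambda>x. x \<in> A) F" "MK_open_submodule L"
      "M \<inter> smul (\<pi> ^ n) ` (A + L) \<subseteq> \<Inter>\<G>"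
      by (elim exE conjE) (rule that)
    then show "\<Inter>\<G> \<noteq> {}"
      using M_Int_scaled_sum_nonempty[OF \<open>F \<noteq> bot\<close> n] by blast
  qed
  have "(\<forall>C\<in>\<U>. closedin T C) \<and> (\<forall>\<G>. finite \<G> \<and> \<G> \<subseteq> \<U> \<longrightarrow> \<Inter>\<G> \<noteq> {}) \<longrightarrow> \<Inter>\<U> \<noteq> {}"
    using compact_T unfolding compact_space_fip by (rule spec)
  then obtain x where x: "x \<in> \<Inter>\<U>"
    using U_closed U_fip by blast
  show thesis
  proof (rule that)
    fix A L assume "eventually (\<lambda>x. x \<in> A) F" "MK_open_submodule L"
    then have "T closure_of (M \<inter> smul (\<pi> ^ n) ` (A + L)) \<in> \<U>"
      unfolding \<U>_def by blast
    with x show "x \<in> T closure_of (M \<inter> smul (\<pi> ^ n) ` (A + L))"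
      by (rule InterD)
  qed
qed

lemma limitin_MK_topology_cluster_point:
  assumes F: "tvs_cauchy_filter (MK_topology nv smul M T) F"
    and x: "\<And>A L. eventually (\<lambda>x. x \<in> A) F \<Longrightarrow> MK_open_submodule L \<Longrightarrow>
      x \<in> T closure_of (M \<inter> smul (\<pi> ^ n) ` (A + L))"
  shows "limitin (MK_topology nv smul M T) id (smul (inverse (\<pi> ^ n)) x) F"
  unfolding limitin_def topspace_MK_topology
proof (intro conjI allI impI UNIV_I)
  define c where "c = \<pi> ^ n"
  define z where "z = smul (inverse c) x"
  have c: "c \<noteq> 0" "c \<in> int_ring nv"
    unfolding c_def by (rule pi_power_nonzero, rule pi_power_in_int_ring)
  have "x \<in> T closure_of (M \<inter> smul c ` (UNIV + UNIV))"
    unfolding c_def using MK_open_submodule_UNIV by (intro x) simp_all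
  then have xM: "x \<in> M"
    unfolding in_closure_of topspace_T by (elim conjE)
  fix U assume "openin (MK_topology nv smul M T) U \<and> smul (inverse (\<pi> ^ n)) x \<in> U"
  then have "\<exists>L. MK_open_submodule L \<and> (\<lambda>y. z + y) ` L \<subseteq> U"
    unfolding openin_MK_topology z_def c_def by blast
  then obtain L where L: "MK_open_submodule L" "(\<lambda>y. z + y) ` L \<subseteq> U"
    by (elim exE conjE) (rule that)
  then have L_sub: "o_submodule nv smul L"
    unfolding MK_open_submodule_def by (elim conjE)
  have "\<exists>A. eventually (\<lambda>x. x \<in> A) F \<and> (\<forall>x\<in>A. \<forall>y\<in>A. x - y \<in> L)"
    by (rule tvs_cauchy_filter_MK_open_submodule[OF F L(1)])
  then obtain A where A: "eventually (\<lambda>x. x \<in> A) F" "\<forall>x\<in>A. \<forall>y\<in>A. x - y \<in> L"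
    by (elim exE conjE) (rule that)
  \<comment> \<open>\<open>x + (c L \<inter> M)\<close> is a neighbourhood of \<open>x\<close> in \<open>M\<close>, so it meets \<open>M \<inter> c (A + L)\<close>.\<close>
  define W where "W = {y \<in> topspace T. y - x \<in> smul c ` L \<inter> M}"
  have "openin T W"
    unfolding W_def using L(1) c xM o_submodule_uminus[OF o_submodule_M]
    by (intro openin_translate_vimage[OF continuous_add]) (auto simp: MK_open_submodule_def topspace_T)
  moreover have "x \<in> W"
    unfolding W_def using xM topspace_T o_submodule_zero[OF o_submodule_image_scale[OF L_sub]]
      o_submodule_zero[OF o_submodule_M] by simp
  moreover have "x \<in> T closure_of (M \<inter> smul c ` (A + L))"
    unfolding c_def using A(1) L(1) by (rule x)
  ultimately obtain y where y: "y \<in> M \<inter> smul c ` (A + L)" "y \<in> W"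
    unfolding in_closure_of by blast
  then obtain a l' where a: "a \<in> A" "l' \<in> L" "y = smul c (a + l')"
    by (blast elim: set_plus_elim)
  from y(2) obtain l'' where l'': "l'' \<in> L" "y - x = smul c l''"
    unfolding W_def by blast
  have "x = y - smul c l''"
    using l''(2) by (simp add: algebra_simps)
  also have "\<dots> = smul c (a + l' - l'')"
    using a(3) by (simp add: scale_right_diff_distrib)
  finally have "z = a + l' - l''"
    unfolding z_def using c(1) by simp
  have "b \<in> U" if "b \<in> A" for b
  proof -
    have "b - a \<in> L"
      using A(2) that a(1) by blast
    then have "(b - a) + l'' - l' \<in> L"
      using o_submodule_diff[OF L_sub o_submodule_add[OF L_sub _ l''(1)] a(2)] by blast
    moreover have "b = z + ((b - a) + l'' - l')"
      using \<open>z = a + l' - l''\<close> by simp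
    ultimately show "b \<in> U"
      using L(2) by blast
  qed
  then show "eventually (\<lambda>x. id x \<in> U) F"
    using A(1) by (auto elim: eventually_mono)
qed

theorem tvs_complete_MK_topology: "tvs_complete (MK_topology nv smul M T)"
  unfolding tvs_complete_def
proof (intro allI impI)
  fix F assume F: "tvs_cauchy_filter (MK_topology nv smul M T) F"
  then have "F \<noteq> bot"
    unfolding tvs_cauchy_filter_def by simp
  obtain n where n: "Mdiv_bounded F n"
    using tvs_cauchy_filter_Mdiv_bounded[OF F] by blast
  obtain x where "\<And>A L. eventually (\<lambda>x. x \<in> A) F \<Longrightarrow> MK_open_submodule L \<Longrightarrow>
      x \<in> T closure_of (M \<inter> smul (\<pi> ^ n) ` (A + L))"
    by (rule Mdiv_bounded_cluster_point[OF \<open>F \<noteq> bot\<close> n]) blast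
  then show "\<exists>z. limitin (MK_topology nv smul M T) id z F"
    using limitin_MK_topology_cluster_point[OF F] by blast
qed

end

theorem lemma1p4:
  fixes nv :: "'k::field \<Rightarrow> real"
    and smul :: "'k \<Rightarrow> 'v::ab_group_add \<Rightarrow> 'v"
    and M :: "'v set"
    and T :: "'v topology"
  assumes "p_adic_field nv"
    and "vector_space smul"
    and "o_submodule nv smul M"
    and "\<forall>v. \<exists>a. a \<in> int_ring nv \<and> a \<noteq> 0 \<and> smul a v \<in> M"
    and "topspace T = M"
    and "topological_o_module nv smul T"
    and "linear_topological nv smul T"
    and "compact_space T"
    and "Hausdorff_space T"
  shows "tvs_complete (MK_topology nv smul M T)"
proof -
  obtain \<pi> where "pseudo_uniformizer nv \<pi>"
    using assms(1) by (rule p_adic_field_imp_pseudo_uniformizer)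
  then interpret compact_o_lattice smul nv \<pi> M T
    using assms(2-6,8)
    by (intro compact_o_lattice.intro o_vector_space.intro compact_o_lattice_axioms.intro)
      (auto simp: pseudo_uniformizer_def topological_o_module_def)
  show ?thesis
    by (rule tvs_complete_MK_topology)
qed

end
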